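(* Let $G$ be a finitely generated sofic group, $(\mathcal X,d)$ a compact metric space and $\mu\in\mathrm{Prob}(\mathcal X^G,G)$ a periodic measure. (i) There is a sofic model $(V_n,\sigma_n,\mu_n)$ for $(G,\mathcal X,\mu)$ such that $(\Pi_v^{\sigma_n})_*\mu_n=\mu$ for all $n$ and all $v\in V_n$. (ii) If $G$ is residually finite, the sofic model in (i) can be chosen to be a residually finite model.
   Context: $G$ acts on $\mathcal X^G$ (product topology) by $(h.\omega)(g)=\omega(gh)$; $\mathrm{Prob}(\mathcal X^G,G)$ is the set of $G$-invariant Borel probability measures; $\mu$ is periodic if it is invariant with finite support. A sofic approximation is $(V_n,\sigma_n)$, $V_n$ finite, $\sigma_n:G\to\mathrm{Sym}(V_n)$, $g\mapsto\sigma_n^g$, with $|\{v:\sigma_n^g\sigma_n^h(v)=\sigma_n^{gh}(v)\}|/|V_n|\to1$ for all $g,h$ and $|\{v:\sigma_n^g(v)\ne v\}|/|V_n|\to1$ for $g\ne e$. $\Pi_v^{\sigma_n}(\rho)=(\rho(\sigma_n^g(v)))_{g\in G}$ for $\rho\in\mathcal X^{V_n}$. A sofic model is $(V_n,\sigma_n,\mu_n)$ with $(V_n,\sigma_n)$ a sofic approximation and $\mu_n\in\mathrm{Prob}(\mathcal X^{V_n})$ such that $|\{v:(\Pi_v^{\sigma_n})_*\mu_n\in\mathcal O\}|/|V_n|\to1$ for every weak* neighbourhood $\mathcal O$ of $\mu$. A residually finite approximation: finite-index normal $\Gamma_n$ with $\Gamma_{n+1}\le\Gamma_n$, $\bigcap\Gamma_n=\{e\}$,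 $V_n=G/\Gamma_n$, $\sigma_n^g(v\Gamma_n)=gv\Gamma_n$. A residually finite model is a sofic model whose approximation is residually finite and whose $\mu_n$ are invariant under the action of the finite group $V_n$ on $\mathcal X^{V_n}$ by $(w.\rho)(v)=\rho(vw)$. *)

theory Defs
  imports "HOL-Probability.Probability" "HOL-Algebra.Generated_Groups" "HOL-Algebra.Left_Coset"
begin

text \<open>Groups are HOL-Algebra groups whose carrier is the whole type 'g.
  The shift space X^G is the function type 'g => 'x with the product topology
  (instance from Function_Topology), carrying its Borel sigma-algebra.\<close>

definition finitely_generated :: "('g, 'b) monoid_scheme \<Rightarrow> bool" where
  "finitely_generated G \<longleftrightarrow>
     (\<exists>S. finite S \<and> S \<subseteq> carrier G \<and> generate G S = carrier G)"

definition shift :: "('g, 'b) monoid_scheme \<Rightarrow> 'g \<Rightarrow> ('g \<Rightarrow> 'x) \<Rightarrow> ('g \<Rightarrow> 'x)" where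
  "shift G h \<omega> = (\<lambda>g. \<omega> (g \<otimes>\<^bsub>G\<^esub> h))"

definition invariant_prob ::
  "('g, 'b) monoid_scheme \<Rightarrow> ('g \<Rightarrow> 'x::topological_space) measure \<Rightarrow> bool" where
  "invariant_prob G \<mu> \<longleftrightarrow>
     prob_space \<mu> \<and> sets \<mu> = sets borel \<and>
     (\<forall>h\<in>carrier G. distr \<mu> borel (shift G h) = \<mu>)"

definition measure_support :: "('a::topological_space) measure \<Rightarrow> 'a set" where
  "measure_support \<mu> = {x. \<forall>U. open U \<longrightarrow> x \<in> U \<longrightarrow> emeasure \<mu> U > 0}"

definition periodic_measure ::
  "('g, 'b) monoid_scheme \<Rightarrow> ('g \<Rightarrow> 'x::topological_space) measure \<Rightarrow> bool" where
  "periodic_measure G \<mu> \<longleftrightarrow> invariant_prob G \<mu> \<and> finite (measure_support \<mu>)"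

definition sofic_approx ::
  "('g, 'b) monoid_scheme \<Rightarrow> (nat \<Rightarrow> 'v set) \<Rightarrow> (nat \<Rightarrow> 'g \<Rightarrow> 'v \<Rightarrow> 'v) \<Rightarrow> bool" where
  "sofic_approx G V \<sigma> \<longleftrightarrow>
     (\<forall>n. finite (V n)) \<and>
     (\<forall>n. \<forall>g\<in>carrier G. bij_betw (\<sigma> n g) (V n) (V n)) \<and>
     (\<forall>g\<in>carrier G. \<forall>h\<in>carrier G.
        (\<lambda>n. real (card {v\<in>V n. \<sigma> n g (\<sigma> n h v) = \<sigma> n (g \<otimes>\<^bsub>G\<^esub> h) v})
              / real (card (V n))) \<longlonglongrightarrow> 1) \<and>
     (\<forall>g\<in>carrier G. g \<noteq> \<one>\<^bsub>G\<^esub> \<longrightarrow>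
        (\<lambda>n. real (card {v\<in>V n. \<sigma> n g v \<noteq> v}) / real (card (V n))) \<longlonglongrightarrow> 1)"

definition sofic_group :: "('g, 'b) monoid_scheme \<Rightarrow> bool" where
  "sofic_group G \<longleftrightarrow> (\<exists>(V :: nat \<Rightarrow> nat set) \<sigma>. sofic_approx G V \<sigma>)"

definition Pi_v :: "(nat \<Rightarrow> 'g \<Rightarrow> 'v \<Rightarrow> 'v) \<Rightarrow> nat \<Rightarrow> 'v \<Rightarrow> ('v \<Rightarrow> 'x) \<Rightarrow> ('g \<Rightarrow> 'x)" where
  "Pi_v \<sigma> n v \<rho> = (\<lambda>g. \<rho> (\<sigma> n g v))"

definition weak_star_nhd :: "('a::topological_space) measure \<Rightarrow> 'a measure set \<Rightarrow> bool" where
  "weak_star_nhd \<mu> U \<longleftrightarrow>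
     (\<exists>(F :: ('a \<Rightarrow> real) set) e. finite F \<and> e > 0 \<and> (\<forall>f\<in>F. continuous_on UNIV f) \<and>
        {\<nu>. prob_space \<nu> \<and> sets \<nu> = sets borel \<and>
             (\<forall>f\<in>F. \<bar>(\<integral>x. f x \<partial>\<nu>) - (\<integral>x. f x \<partial>\<mu>)\<bar> < e)} \<subseteq> U)"

text \<open>Measures on X^{V_n}: probability measures on the product space
  PiM (V n) (%_. borel) (extensional functions on V n).\<close>
definition sofic_model ::
  "('g, 'b) monoid_scheme \<Rightarrow> ('g \<Rightarrow> 'x::topological_space) measure \<Rightarrow>
   (nat \<Rightarrow> 'v set) \<Rightarrow> (nat \<Rightarrow> 'g \<Rightarrow> 'v \<Rightarrow> 'v) \<Rightarrow> (nat \<Rightarrow> ('v \<Rightarrow> 'x) measure) \<Rightarrow> bool" where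
  "sofic_model G \<mu> V \<sigma> \<mu>s \<longleftrightarrow>
     sofic_approx G V \<sigma> \<and>
     (\<forall>n. prob_space (\<mu>s n) \<and> sets (\<mu>s n) = sets (PiM (V n) (\<lambda>_. borel))) \<and>
     (\<forall>U. weak_star_nhd \<mu> U \<longrightarrow>
        (\<lambda>n. real (card {v\<in>V n. distr (\<mu>s n) borel (Pi_v \<sigma> n v) \<in> U})
              / real (card (V n))) \<longlonglongrightarrow> 1)"

definition residually_finite :: "('g, 'b) monoid_scheme \<Rightarrow> bool" where
  "residually_finite G \<longleftrightarrow>
     (\<forall>g\<in>carrier G. g \<noteq> \<one>\<^bsub>G\<^esub> \<longrightarrow>
        (\<exists>N. N \<lhd> G \<and> finite (rcosets\<^bsub>G\<^esub> N) \<and> g \<notin> N))"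

definition rf_chain :: "('g, 'b) monoid_scheme \<Rightarrow> (nat \<Rightarrow> 'g set) \<Rightarrow> bool" where
  "rf_chain G \<Gamma> \<longleftrightarrow>
     (\<forall>n. \<Gamma> n \<lhd> G \<and> finite (lcosets\<^bsub>G\<^esub> (\<Gamma> n))) \<and>
     (\<forall>n. \<Gamma> (Suc n) \<subseteq> \<Gamma> n) \<and>
     (\<Inter>n. \<Gamma> n) = {\<one>\<^bsub>G\<^esub>}"

definition rf_V :: "('g, 'b) monoid_scheme \<Rightarrow> (nat \<Rightarrow> 'g set) \<Rightarrow> nat \<Rightarrow> 'g set set" where
  "rf_V G \<Gamma> n = lcosets\<^bsub>G\<^esub> (\<Gamma> n)"

definition rf_\<sigma> :: "('g, 'b) monoid_scheme \<Rightarrow> nat \<Rightarrow> 'g \<Rightarrow> 'g set \<Rightarrow> 'g set" where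
  "rf_\<sigma> G n g C = g <#\<^bsub>G\<^esub> C"

definition rf_model ::
  "('g, 'b) monoid_scheme \<Rightarrow> ('g \<Rightarrow> 'x::topological_space) measure \<Rightarrow>
   (nat \<Rightarrow> 'g set) \<Rightarrow> (nat \<Rightarrow> ('g set \<Rightarrow> 'x) measure) \<Rightarrow> bool" where
  "rf_model G \<mu> \<Gamma> \<mu>s \<longleftrightarrow>
     rf_chain G \<Gamma> \<and>
     sofic_model G \<mu> (rf_V G \<Gamma>) (rf_\<sigma> G) \<mu>s \<and>
     (\<forall>n. \<forall>w\<in>rf_V G \<Gamma> n.
        distr (\<mu>s n) (PiM (rf_V G \<Gamma> n) (\<lambda>_. borel))
          (\<lambda>\<rho>. \<lambda>v\<in>rf_V G \<Gamma> n. \<rho> (v <#>\<^bsub>G\<^esub> w)) = \<mu>s n)"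

end

(*
  A periodic measure mu has finite support S, and S is shift-invariant. The pointwise stabiliser
  N of S is therefore a normal subgroup of finite index, and mu-almost every configuration omega
  satisfies omega (g h) = omega g for h in N. Now let G act on finitely many left cosets of a
  subgroup inside N and push mu forward along omega |-> (C |-> omega (rep C)). Seen from a coset C
  the resulting configuration is the shift of omega by rep C, so its law is exactly mu, at every
  vertex and for every n. For (i) the cosets of N are multiplied with an arbitrary sofic
  approximation; for (ii) one uses the quotients by a residual chain of subgroups inside N, and
  the pushforward is then also invariant under right multiplication of the cosets.
*)
theory Submission
  imports Defs
begin

section \<open>Measurability on finite products of a compact metric space\<close>

lemma compact_metric_countable_dense:
  assumes "compact (UNIV :: 'x::metric_space set)"
  obtains D :: "'x::metric_space set" where "countable D" "\<And>x e. e > 0 \<Longrightarrow> \<exists>q\<in>D. dist q x < e"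
proof -
  have "\<exists>T. finite T \<and> (UNIV :: 'x set) \<subseteq> (\<Union>c\<in>T. ball c (1 / Suc k))" for k :: nat
  proof -
    have "(UNIV :: 'x set) \<subseteq> (\<Union>c\<in>UNIV. ball c (1 / Suc k))" by auto
    then obtain T where "finite T" "(UNIV :: 'x set) \<subseteq> (\<Union>c\<in>T. ball c (1 / Suc k))"
      using compactE_image[OF assms, of UNIV "\<lambda>c. ball c (1 / Suc k)"] by auto
    then show ?thesis by blast
  qed
  then obtain T where T: "\<And>k. finite (T k)" "\<And>k. (UNIV :: 'x set) \<subseteq> (\<Union>c\<in>T k. ball c (1 / Suc k))"
    by metis
  show ?thesis
  proof (rule that[of "\<Union>k. T k"])
    show "countable (\<Union>k. T k)" using T(1) by (simp add: countable_finite)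
    fix x :: 'x and e :: real assume "e > 0"
    then obtain k where k: "1 / real (Suc k) < e" by (rule nat_approx_posE)
    from T(2)[of k] obtain c where "c \<in> T k" "x \<in> ball c (1 / Suc k)" by blast
    moreover from this(2) have "dist c x < e" using k by simp
    ultimately show "\<exists>q\<in>\<Union>k. T k. dist q x < e" by blast
  qed
qed

lemma compact_UNIV_fun:
  assumes "compact (UNIV :: 'x::topological_space set)"
  shows "compact (UNIV :: ('a \<Rightarrow> 'x) set)"
  using assms compact_space_product_topology[of "\<lambda>_::'a. euclidean :: 'x topology" UNIV]
  by (simp add: compact_space_def euclidean_product_topology)

lemma open_fun_contains_cylinder:
  fixes U :: "('a \<Rightarrow> 'x::metric_space) set"
  assumes "open U" "\<omega> \<in> U"
  obtains J e where "finite J" "e > 0" "\<And>\<omega>'. \<forall>i\<in>J. dist (\<omega>' i) (\<omega> i) < e \<Longrightarrow> \<omega>' \<in> U"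
proof -
  obtain B where B: "finite {i. B i \<noteq> UNIV}" "\<And>i. open (B i)" "\<omega> \<in> PiE UNIV B" "PiE UNIV B \<subseteq> U"
    using assms unfolding open_fun_def openin_product_topology_alt by force
  define J where "J = {i. B i \<noteq> UNIV}"
  have "\<exists>e>0. ball (\<omega> i) e \<subseteq> B i" for i
    using B(2,3) open_contains_ball by blast
  then obtain r where r: "\<And>i. r i > 0" "\<And>i. ball (\<omega> i) (r i) \<subseteq> B i" by metis
  define e where "e = Min (insert 1 (r ` J))"
  show ?thesis
  proof (rule that)
    show "finite J" using B(1) by (simp add: J_def)
    then show "e > 0" unfolding e_def using r(1) by (subst Min_gr_iff) auto
    fix \<omega>' assume close: "\<forall>i\<in>J. dist (\<omega>' i) (\<omega> i) < e"
    have "\<omega>' i \<in> B i" for i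
    proof (cases "i \<in> J")
      case True
      then have "e \<le> r i" unfolding e_def using \<open>finite J\<close> by (intro Min_le) auto
      then have "\<omega>' i \<in> ball (\<omega> i) (r i)" using close True by (auto simp: dist_commute)
      then show ?thesis using r(2) by blast
    qed (simp add: J_def)
    then show "\<omega>' \<in> U" using B(4) by auto
  qed
qed

lemma sets_PiM_if_contains_balls:
  fixes W :: "('v \<Rightarrow> 'x::metric_space) set"
  assumes V: "finite V" and X: "compact (UNIV :: 'x set)"
    and W: "W \<subseteq> PiE V (\<lambda>_. UNIV)"
    and balls: "\<And>\<rho>. \<rho> \<in> W \<Longrightarrow>
      \<exists>e>0. \<forall>\<rho>'\<in>PiE V (\<lambda>_. UNIV). (\<forall>u\<in>V. dist (\<rho>' u) (\<rho> u) < e) \<longrightarrow> \<rho>' \<in> W"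
  shows "W \<in> sets (PiM V (\<lambda>_. borel))"
proof -
  obtain D :: "'x set" where D: "countable D" "\<And>x e. e > 0 \<Longrightarrow> \<exists>q\<in>D. dist q x < e"
    using compact_metric_countable_dense[OF X] by blast
  define box where "box = (\<lambda>(q :: 'v \<Rightarrow> 'x, k :: nat). PiE V (\<lambda>u. ball (q u) (1 / Suc k)))"
  define I where "I = {i \<in> PiE V (\<lambda>_. D) \<times> UNIV. box i \<subseteq> W}"
  have "W \<subseteq> (\<Union>i\<in>I. box i)"
  proof
    fix \<rho> assume "\<rho> \<in> W"
    then obtain e where e: "e > 0"
      "\<forall>\<rho>'\<in>PiE V (\<lambda>_. UNIV). (\<forall>u\<in>V. dist (\<rho>' u) (\<rho> u) < e) \<longrightarrow> \<rho>' \<in> W"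
      using balls by blast
    obtain k :: nat where k: "1 / real (Suc k) < e / 2"
      using nat_approx_posE[of "e / 2"] \<open>e > 0\<close> by auto
    have "\<forall>u. \<exists>q\<in>D. dist q (\<rho> u) < 1 / Suc k" using D(2) by simp
    then obtain q0 where q0: "\<And>u. q0 u \<in> D \<and> dist (q0 u) (\<rho> u) < 1 / Suc k" by metis
    define q where "q = restrict q0 V"
    have "box (q, k) \<subseteq> W"
    proof
      fix \<rho>' assume \<rho>': "\<rho>' \<in> box (q, k)"
      have "dist (\<rho>' u) (\<rho> u) < e" if "u \<in> V" for u
      proof -
        have "dist (\<rho>' u) (\<rho> u) \<le> dist (q u) (\<rho>' u) + dist (q u) (\<rho> u)"
          by (rule dist_triangle3)
        also have "\<dots> < 1 / Suc k + 1 / Suc k"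
        proof (rule add_strict_mono)
          have "\<rho>' u \<in> ball (q u) (1 / Suc k)" using \<rho>' that by (simp add: box_def PiE_iff)
          then show "dist (q u) (\<rho>' u) < 1 / Suc k" by simp
          show "dist (q u) (\<rho> u) < 1 / Suc k" using q0 that by (simp add: q_def)
        qed
        finally show ?thesis using k by linarith
      qed
      moreover have "\<rho>' \<in> PiE V (\<lambda>_. UNIV)" using \<rho>' by (auto simp: box_def)
      ultimately show "\<rho>' \<in> W" using e(2) by blast
    qed
    moreover have "q \<in> PiE V (\<lambda>_. D)" using q0 by (simp add: q_def)
    moreover have "\<rho> \<in> box (q, k)"
      using \<open>\<rho> \<in> W\<close> W q0 by (auto simp: box_def q_def dist_commute PiE_iff)
    ultimately show "\<rho> \<in> (\<Union>i\<in>I. box i)" unfolding I_def by blast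
  qed
  moreover have "(\<Union>i\<in>I. box i) \<subseteq> W" by (auto simp: I_def)
  ultimately have "W = (\<Union>i\<in>I. box i)" by (rule antisym)
  also have "\<dots> \<in> sets (PiM V (\<lambda>_. borel))"
  proof (rule sets.countable_UN'')
    have "countable (PiE V (\<lambda>_. D) \<times> (UNIV :: nat set))"
      using countable_PiE[OF V, of "\<lambda>_. D"] D(1) by (simp add: countable_SIGMA)
    then show "countable I" by (rule countable_subset[rotated]) (simp add: I_def)
    show "box i \<in> sets (PiM V (\<lambda>_. borel))" for i
      unfolding box_def by (cases i) (auto intro!: sets_PiM_I_finite V)
  qed
  finally show ?thesis .
qed

lemma measurable_precompose_PiM:
  fixes s :: "'g \<Rightarrow> 'v"
  assumes V: "finite V" and s: "\<And>g. s g \<in> V" and X: "compact (UNIV :: 'x::metric_space set)"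
  shows "(\<lambda>\<rho>. \<lambda>g. \<rho> (s g)) \<in> PiM V (\<lambda>_. borel :: 'x measure) \<rightarrow>\<^sub>M borel"
proof (rule borel_measurableI)
  fix U :: "('g \<Rightarrow> 'x) set" assume "open U"
  let ?W = "(\<lambda>\<rho>. \<lambda>g. \<rho> (s g)) -` U \<inter> space (PiM V (\<lambda>_. borel :: 'x measure))"
  show "?W \<in> sets (PiM V (\<lambda>_. borel))"
  proof (rule sets_PiM_if_contains_balls[OF V X])
    show "?W \<subseteq> PiE V (\<lambda>_. UNIV)" by (simp add: space_PiM)
    fix \<rho> assume "\<rho> \<in> ?W"
    then have "(\<lambda>g. \<rho> (s g)) \<in> U" by simp
    then obtain J e where "e > 0" and e: "\<And>\<omega>'. \<forall>i\<in>J. dist (\<omega>' i) (\<rho> (s i)) < e \<Longrightarrow> \<omega>' \<in> U"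
      by (rule open_fun_contains_cylinder[OF \<open>open U\<close>]) auto
    have "\<rho>' \<in> ?W" if "\<rho>' \<in> PiE V (\<lambda>_. UNIV)" "\<forall>u\<in>V. dist (\<rho>' u) (\<rho> u) < e" for \<rho>'
      using that s e[of "\<lambda>g. \<rho>' (s g)"] by (simp add: space_PiM)
    then show "\<exists>e>0. \<forall>\<rho>'\<in>PiE V (\<lambda>_. UNIV). (\<forall>u\<in>V. dist (\<rho>' u) (\<rho> u) < e) \<longrightarrow> \<rho>' \<in> ?W"
      using \<open>e > 0\<close> by blast
  qed
qed

section \<open>The shift and supports of invariant measures\<close>

lemma continuous_on_shift: "continuous_on UNIV (shift G h :: ('g \<Rightarrow> 'x::topological_space) \<Rightarrow> _)"
  unfolding shift_def
  by (intro continuous_on_coordinatewise_then_product continuous_on_product_coordinates)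

lemma measurable_shift: "shift G h \<in> borel_measurable (borel :: ('g \<Rightarrow> 'x::topological_space) measure)"
  by (rule borel_measurable_continuous_onI[OF continuous_on_shift])

lemma emeasure_eq_0_if_disjoint_support:
  fixes \<mu> :: "'a::topological_space measure"
  assumes s\<mu>: "sets \<mu> = sets borel" and cpt: "compact (UNIV :: 'a set)"
    and C: "closed C" "C \<inter> measure_support \<mu> = {}"
  shows "emeasure \<mu> C = 0"
proof -
  have "\<exists>U. open U \<and> x \<in> U \<and> emeasure \<mu> U = 0" if "x \<in> C" for x
  proof -
    have "x \<notin> measure_support \<mu>" using C(2) that by blast
    then show ?thesis by (auto simp: measure_support_def not_gr_zero)
  qed
  then obtain U where U: "\<And>x. x \<in> C \<Longrightarrow> open (U x) \<and> x \<in> U x \<and> emeasure \<mu> (U x) = 0"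
    by metis
  have "compact C" using C(1) cpt by (rule closed_Int_compact[of C UNIV, simplified])
  then obtain F where F: "F \<subseteq> C" "finite F" "C \<subseteq> (\<Union>x\<in>F. U x)"
    using compactE_image[of C C U] U by blast
  have sets: "U ` F \<subseteq> sets \<mu>" using U F(1) s\<mu> by auto
  have "emeasure \<mu> C \<le> emeasure \<mu> (\<Union>x\<in>F. U x)"
    using sets F(2,3) by (intro emeasure_mono) auto
  also have "\<dots> \<le> (\<Sum>x\<in>F. emeasure \<mu> (U x))"
    using emeasure_subadditive_finite[OF F(2) sets] .
  also have "\<dots> = 0" using U F(1) by (intro sum.neutral) auto
  finally show ?thesis by simp
qed

lemma AE_eq_if_eq_on_support:
  fixes \<mu> :: "'a::topological_space measure" and f g :: "'a \<Rightarrow> 'b::metric_space"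
  assumes s\<mu>: "sets \<mu> = sets borel" and cpt: "compact (UNIV :: 'a set)"
    and cont: "continuous_on UNIV f" "continuous_on UNIV g"
    and eq: "\<And>x. x \<in> measure_support \<mu> \<Longrightarrow> f x = g x"
  shows "AE x in \<mu>. f x = g x"
proof -
  have "AE x in \<mu>. dist (f x) (g x) < 1 / Suc k" for k :: nat
  proof -
    define C where "C = {x. 1 / Suc k \<le> dist (f x) (g x)}"
    have "closed C" unfolding C_def using cont by (intro closed_Collect_le continuous_intros)
    moreover have "C \<inter> measure_support \<mu> = {}" using eq by (auto simp: C_def)
    ultimately have "C \<in> null_sets \<mu>"
      using emeasure_eq_0_if_disjoint_support[OF s\<mu> cpt] s\<mu> by (auto intro: null_setsI)
    then show ?thesis by (rule AE_I') (auto simp: C_def not_le)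
  qed
  then have "AE x in \<mu>. \<forall>k::nat. dist (f x) (g x) < 1 / Suc k" by (simp add: AE_all_countable)
  then show ?thesis
  proof (rule AE_mp, intro AE_I2 impI)
    fix x assume small: "\<forall>k::nat. dist (f x) (g x) < 1 / Suc k"
    show "f x = g x"
    proof (rule ccontr)
      assume "f x \<noteq> g x"
      then obtain k :: nat where "1 / Suc k < dist (f x) (g x)"
        using nat_approx_posE[of "dist (f x) (g x)"] by auto
      then show False using small by (meson not_less_iff_gr_or_eq)
    qed
  qed
qed

lemma shift_in_measure_support:
  fixes \<mu> :: "('g \<Rightarrow> 'x::topological_space) measure"
  assumes inv: "invariant_prob G \<mu>" and h: "h \<in> carrier G" and x: "x \<in> measure_support \<mu>"
  shows "shift G h x \<in> measure_support \<mu>"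
  unfolding measure_support_def
proof (intro CollectI allI impI)
  fix U assume U: "open U" "shift G h x \<in> U"
  have s\<mu>: "sets \<mu> = sets borel" and d: "distr \<mu> borel (shift G h) = \<mu>"
    using inv h unfolding invariant_prob_def by auto
  have "open (shift G h -` U)"
    using continuous_on_open_vimage[OF open_UNIV] continuous_on_shift U(1) by (metis Int_UNIV_right)
  then have "emeasure \<mu> (shift G h -` U) > 0"
    using x U(2) unfolding measure_support_def by blast
  also have "emeasure \<mu> (shift G h -` U) = emeasure (distr \<mu> borel (shift G h)) U"
    using U(1) measurable_shift sets_eq_imp_space_eq[OF s\<mu>]
    by (subst emeasure_distr) (auto simp: measurable_cong_sets[OF s\<mu> refl])
  finally show "emeasure \<mu> U > 0" using d by simp
qed

section \<open>Lifting measures to finite sets of coordinates\<close>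

definition lcoset_constant :: "('g, 'b) monoid_scheme \<Rightarrow> 'g set \<Rightarrow> ('g \<Rightarrow> 'x) \<Rightarrow> bool" where
  "lcoset_constant G N \<omega> \<longleftrightarrow> (\<forall>g. \<forall>h\<in>N. \<omega> (g \<otimes>\<^bsub>G\<^esub> h) = \<omega> g)"

definition lift_measure ::
  "('g \<Rightarrow> 'x::topological_space) measure \<Rightarrow> 'v set \<Rightarrow> ('v \<Rightarrow> 'g) \<Rightarrow> ('v \<Rightarrow> 'x) measure" where
  "lift_measure \<mu> V r = distr \<mu> (PiM V (\<lambda>_. borel)) (\<lambda>\<omega>. \<lambda>u\<in>V. \<omega> (r u))"

lemma measurable_lift:
  assumes "sets \<mu> = sets (borel :: ('g \<Rightarrow> 'x::topological_space) measure)"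
  shows "(\<lambda>\<omega>. \<lambda>u\<in>V. \<omega> (r u)) \<in> \<mu> \<rightarrow>\<^sub>M PiM V (\<lambda>_. borel :: 'x measure)"
  unfolding measurable_cong_sets[OF assms refl]
  by (intro measurable_restrict borel_measurable_continuous_onI continuous_on_product_coordinates)

lemma sets_lift_measure [simp]: "sets (lift_measure \<mu> V r) = sets (PiM V (\<lambda>_. borel))"
  by (simp add: lift_measure_def)

lemma prob_space_lift_measure:
  "prob_space \<mu> \<Longrightarrow> sets \<mu> = sets borel \<Longrightarrow> prob_space (lift_measure \<mu> V r)"
  unfolding lift_measure_def by (rule prob_space.prob_space_distr[OF _ measurable_lift])

lemma distr_Pi_v_lift_measure:
  fixes \<mu> :: "('g \<Rightarrow> 'x::metric_space) measure"
  assumes inv: "invariant_prob G \<mu>" and X: "compact (UNIV :: 'x set)"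
    and AE: "AE \<omega> in \<mu>. lcoset_constant G N \<omega>"
    and V: "finite V" and \<sigma>: "\<And>g. \<sigma> n g v \<in> V" and rv: "r v \<in> carrier G"
    and r: "\<And>g. r (\<sigma> n g v) \<in> (g \<otimes>\<^bsub>G\<^esub> r v) <#\<^bsub>G\<^esub> N"
  shows "distr (lift_measure \<mu> V r) borel (Pi_v \<sigma> n v) = \<mu>"
proof -
  let ?T = "\<lambda>\<omega>. \<lambda>u\<in>V. \<omega> (r u)"
  have s\<mu>: "sets \<mu> = sets borel" using inv by (simp add: invariant_prob_def)
  have T: "?T \<in> \<mu> \<rightarrow>\<^sub>M PiM V (\<lambda>_. borel)" by (rule measurable_lift[OF s\<mu>])
  have \<Pi>: "Pi_v \<sigma> n v \<in> PiM V (\<lambda>_. borel :: 'x measure) \<rightarrow>\<^sub>M borel"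
    unfolding Pi_v_def by (rule measurable_precompose_PiM[OF V \<sigma> X])
  \<comment> \<open>seen from \<open>v\<close>, the lifted configuration is the shift of \<open>\<omega>\<close> by \<open>r v\<close>\<close>
  have "AE \<omega> in \<mu>. (Pi_v \<sigma> n v \<circ> ?T) \<omega> = shift G (r v) \<omega>"
    using AE
  proof eventually_elim
    case (elim \<omega>)
    have "\<omega> (r (\<sigma> n g v)) = \<omega> (g \<otimes>\<^bsub>G\<^esub> r v)" for g
      using r[of g] elim by (auto simp: l_coset_def lcoset_constant_def)
    then show ?case using \<sigma> by (simp add: Pi_v_def shift_def)
  qed
  then have "distr \<mu> borel (Pi_v \<sigma> n v \<circ> ?T) = distr \<mu> borel (shift G (r v))"
    using measurable_comp[OF T \<Pi>] measurable_shift
    by (intro distr_cong_AE) (simp_all add: measurable_cong_sets[OF s\<mu> refl])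
  also have "\<dots> = \<mu>" using inv rv by (simp add: invariant_prob_def)
  finally show ?thesis by (simp add: lift_measure_def distr_distr[OF \<Pi> T])
qed

section \<open>Sofic approximations and exact models\<close>

lemma sofic_approx_eventually_nonempty:
  assumes "sofic_approx G V \<sigma>" "g \<in> carrier G"
  shows "eventually (\<lambda>n. V n \<noteq> {}) sequentially"
proof -
  have "(\<lambda>n. real (card {v\<in>V n. \<sigma> n g (\<sigma> n g v) = \<sigma> n (g \<otimes>\<^bsub>G\<^esub> g) v}) / real (card (V n)))
      \<longlonglongrightarrow> 1"
    using assms by (simp add: sofic_approx_def)
  then have "eventually (\<lambda>n. 0 < real (card {v\<in>V n. \<sigma> n g (\<sigma> n g v) = \<sigma> n (g \<otimes>\<^bsub>G\<^esub> g) v})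
      / real (card (V n))) sequentially"
    by (rule order_tendstoD) simp
  \<comment> \<open>an empty \<open>V n\<close> would make the ratio \<open>0 / 0 = 0\<close>\<close>
  then show ?thesis by eventually_elim auto
qed

lemma tendsto_card_ratio_one:
  assumes "eventually (\<lambda>n. V n \<noteq> {} \<and> finite (V n) \<and> (\<forall>v\<in>V n. P n v)) sequentially"
  shows "(\<lambda>n. real (card {v\<in>V n. P n v}) / real (card (V n))) \<longlonglongrightarrow> 1"
proof (rule tendsto_eventually)
  show "eventually (\<lambda>n. real (card {v\<in>V n. P n v}) / real (card (V n)) = 1) sequentially"
    using assms
  proof eventually_elim
    case (elim n)
    then have "{v\<in>V n. P n v} = V n" by auto
    with elim show ?case by (simp add: card_gt_0_iff)
  qed
qed

lemma sofic_model_if_exact: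
  assumes sa: "sofic_approx G V \<sigma>" and "group G"
    and \<mu>: "prob_space \<mu>" "sets \<mu> = sets borel"
    and \<mu>s: "\<And>n. prob_space (\<mu>s n)" "\<And>n. sets (\<mu>s n) = sets (PiM (V n) (\<lambda>_. borel))"
    and exact: "\<And>n v. v \<in> V n \<Longrightarrow> distr (\<mu>s n) borel (Pi_v \<sigma> n v) = \<mu>"
  shows "sofic_model G \<mu> V \<sigma> \<mu>s"
proof -
  have fin: "finite (V n)" for n using sa by (simp add: sofic_approx_def)
  have ne: "eventually (\<lambda>n. V n \<noteq> {}) sequentially"
    using sofic_approx_eventually_nonempty[OF sa monoid.one_closed] \<open>group G\<close>
    by (simp add: group.is_monoid)
  have "(\<lambda>n. real (card {v\<in>V n. distr (\<mu>s n) borel (Pi_v \<sigma> n v) \<in> U}) / real (card (V n)))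
      \<longlonglongrightarrow> 1" if "weak_star_nhd \<mu> U" for U
  proof (rule tendsto_card_ratio_one)
    have "\<mu> \<in> U" using that \<mu> by (auto simp: weak_star_nhd_def)
    show "eventually (\<lambda>n. V n \<noteq> {} \<and> finite (V n) \<and>
        (\<forall>v\<in>V n. distr (\<mu>s n) borel (Pi_v \<sigma> n v) \<in> U)) sequentially"
      using ne by eventually_elim (simp add: fin exact \<open>\<mu> \<in> U\<close>)
  qed
  then show ?thesis using sa \<mu>s by (simp add: sofic_model_def)
qed

lemma card_ratio_le_one:
  assumes "finite A"
  shows "real (card {x \<in> A. P x}) / real (card A) \<le> 1"
proof (cases "A = {}")
  case False
  then have "card A > 0" using assms by (simp add: card_gt_0_iff)
  moreover have "card {x \<in> A. P x} \<le> card A" using assms by (intro card_mono) auto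
  ultimately show ?thesis by (simp add: divide_le_eq_1)
qed simp

lemma sofic_approx_prod_action:
  assumes sa: "sofic_approx G V \<sigma>" and K: "finite K" "K \<noteq> {}"
    and act_bij: "\<And>g. g \<in> carrier G \<Longrightarrow> bij_betw (act g) K K"
    and act_mult: "\<And>g h k. g \<in> carrier G \<Longrightarrow> h \<in> carrier G \<Longrightarrow> k \<in> K \<Longrightarrow>
      act g (act h k) = act (g \<otimes>\<^bsub>G\<^esub> h) k"
  shows "sofic_approx G (\<lambda>n. V n \<times> K) (\<lambda>n g. map_prod (\<sigma> n g) (act g))"
proof -
  let ?\<sigma> = "\<lambda>n g. map_prod (\<sigma> n g) (act g)"
  have fin: "finite (V n)" for n using sa by (simp add: sofic_approx_def)
  have ratio: "real (card (A \<times> K)) / real (card (V n \<times> K)) = real (card A) / real (card (V n))"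
    for A n using K by (simp add: card_cartesian_product card_gt_0_iff)
  have "(\<lambda>n. real (card {p \<in> V n \<times> K. ?\<sigma> n g (?\<sigma> n h p) = ?\<sigma> n (g \<otimes>\<^bsub>G\<^esub> h) p})
      / real (card (V n \<times> K))) \<longlonglongrightarrow> 1" if "g \<in> carrier G" "h \<in> carrier G" for g h
  proof -
    have "{p \<in> V n \<times> K. ?\<sigma> n g (?\<sigma> n h p) = ?\<sigma> n (g \<otimes>\<^bsub>G\<^esub> h) p}
        = {v \<in> V n. \<sigma> n g (\<sigma> n h v) = \<sigma> n (g \<otimes>\<^bsub>G\<^esub> h) v} \<times> K" for n
      using act_mult[OF that] by auto
    then show ?thesis using sa that by (simp add: ratio sofic_approx_def)
  qed
  moreover have "(\<lambda>n. real (card {p \<in> V n \<times> K. ?\<sigma> n g p \<noteq> p}) / real (card (V n \<times> K)))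
      \<longlonglongrightarrow> 1" if "g \<in> carrier G" "g \<noteq> \<one>\<^bsub>G\<^esub>" for g
  proof (rule tendsto_sandwich[OF always_eventually always_eventually])
    show "(\<lambda>n. real (card {v \<in> V n. \<sigma> n g v \<noteq> v}) / real (card (V n))) \<longlonglongrightarrow> 1"
      using sa that by (simp add: sofic_approx_def)
    show "\<forall>n. real (card {v \<in> V n. \<sigma> n g v \<noteq> v}) / real (card (V n))
        \<le> real (card {p \<in> V n \<times> K. ?\<sigma> n g p \<noteq> p}) / real (card (V n \<times> K))"
    proof
      fix n
      have "card ({v \<in> V n. \<sigma> n g v \<noteq> v} \<times> K) \<le> card {p \<in> V n \<times> K. ?\<sigma> n g p \<noteq> p}"
        using fin K by (intro card_mono) auto
      then show "real (card {v \<in> V n. \<sigma> n g v \<noteq> v}) / real (card (V n))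
          \<le> real (card {p \<in> V n \<times> K. ?\<sigma> n g p \<noteq> p}) / real (card (V n \<times> K))"
        by (simp flip: ratio add: divide_right_mono)
    qed
    show "\<forall>n. real (card {p \<in> V n \<times> K. ?\<sigma> n g p \<noteq> p}) / real (card (V n \<times> K)) \<le> 1"
      by (intro allI card_ratio_le_one) (simp add: fin K)
  qed simp
  moreover have "bij_betw (?\<sigma> n g) (V n \<times> K) (V n \<times> K)" if "g \<in> carrier G" for n g
    using sa that act_bij by (intro bij_betw_map_prod) (simp_all add: sofic_approx_def)
  ultimately show ?thesis using fin K by (simp add: sofic_approx_def)
qed

lemma card_image_Collect:
  assumes "inj_on f A"
  shows "card {y \<in> f ` A. P y} = card {x \<in> A. P (f x)}"
proof -
  have "{y \<in> f ` A. P y} = f ` {x \<in> A. P (f x)}" by auto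
  then show ?thesis using card_image[OF inj_on_subset[OF assms]] by simp
qed

lemma sofic_approx_image:
  assumes "group G" and sa: "sofic_approx G V \<sigma>" and inj: "\<And>n. inj_on f (V n)"
  shows "sofic_approx G (\<lambda>n. f ` V n) (\<lambda>n g. f \<circ> \<sigma> n g \<circ> inv_into (V n) f)"
proof -
  let ?\<sigma> = "\<lambda>n g. f \<circ> \<sigma> n g \<circ> inv_into (V n) f"
  have bij: "bij_betw (\<sigma> n g) (V n) (V n)" if "g \<in> carrier G" for n g
    using sa that by (simp add: sofic_approx_def)
  have \<sigma>V: "\<sigma> n g v \<in> V n" if "g \<in> carrier G" "v \<in> V n" for n g v
    using bij_betw_apply[OF bij] that .
  have inv_f: "inv_into (V n) f (f v) = v" if "v \<in> V n" for n v
    using inv_into_f_f[OF inj that] .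
  have f_eq: "f x = f y \<longleftrightarrow> x = y" if "x \<in> V n" "y \<in> V n" for n x y
    using inj_on_eq_iff[OF inj that] .
  have ratio: "real (card {m \<in> f ` V n. P m}) / real (card (f ` V n))
      = real (card {v \<in> V n. P (f v)}) / real (card (V n))" for n P
    using card_image_Collect[OF inj, of n P] card_image[OF inj] by simp
  have "bij_betw (?\<sigma> n g) (f ` V n) (f ` V n)" if "g \<in> carrier G" for n g
    using bij_betw_trans[OF bij_betw_trans[OF bij_betw_inv_into[OF inj_on_imp_bij_betw[OF inj]]
          bij[OF that]] inj_on_imp_bij_betw[OF inj]]
    by (simp add: comp_assoc)
  moreover have "{v \<in> V n. ?\<sigma> n g (?\<sigma> n h (f v)) = ?\<sigma> n (g \<otimes>\<^bsub>G\<^esub> h) (f v)}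
      = {v \<in> V n. \<sigma> n g (\<sigma> n h v) = \<sigma> n (g \<otimes>\<^bsub>G\<^esub> h) v}"
    if "g \<in> carrier G" "h \<in> carrier G" for n g h
    using that monoid.m_closed[OF group.is_monoid[OF \<open>group G\<close>] that]
    by (intro Collect_cong conj_cong refl) (simp add: inv_f f_eq[where n=n] \<sigma>V)
  moreover have "{v \<in> V n. ?\<sigma> n g (f v) \<noteq> f v} = {v \<in> V n. \<sigma> n g v \<noteq> v}"
    if "g \<in> carrier G" for n g
    using that by (intro Collect_cong conj_cong refl) (simp add: inv_f f_eq[where n=n] \<sigma>V)
  ultimately show ?thesis using sa by (simp add: sofic_approx_def ratio)
qed

section \<open>Groups with full carrier: cosets, stabilisers and residual chains\<close>

definition shift_stabilizer :: "('g, 'b) monoid_scheme \<Rightarrow> ('g \<Rightarrow> 'x) set \<Rightarrow> 'g set" where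
  "shift_stabilizer G S = {h. \<forall>\<omega>\<in>S. shift G h \<omega> = \<omega>}"

definition coset_rep :: "'g set \<Rightarrow> 'g" where
  "coset_rep C = (SOME a. a \<in> C)"

locale group_on_UNIV = group +
  assumes carrier_eq_UNIV [simp]: "carrier G = UNIV"
begin

lemma shift_shift: "shift G a (shift G b \<omega>) = shift G (a \<otimes> b) \<omega>"
  unfolding shift_def by (simp add: m_assoc)

lemma shift_one [simp]: "shift G \<one> \<omega> = \<omega>"
  unfolding shift_def by simp

lemma shift_eq_iff: "shift G a \<omega> = shift G b \<omega> \<longleftrightarrow> shift G (inv a \<otimes> b) \<omega> = \<omega>"
  by (metis shift_shift shift_one inv_closed r_inv l_inv m_assoc carrier_eq_UNIV UNIV_I)

lemma mem_lcos_iff: "b \<in> a <# H \<longleftrightarrow> inv a \<otimes> b \<in> H"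
proof
  assume "b \<in> a <# H"
  then obtain h where "h \<in> H" "b = a \<otimes> h" unfolding l_coset_def by blast
  then show "inv a \<otimes> b \<in> H" by (simp add: m_assoc[symmetric])
next
  assume "inv a \<otimes> b \<in> H"
  moreover have "b = a \<otimes> (inv a \<otimes> b)" by (simp add: m_assoc[symmetric])
  ultimately show "b \<in> a <# H" unfolding l_coset_def by blast
qed

lemma countable_generate:
  assumes "countable S"
  shows "countable (generate G S)"
proof -
  let ?prod = "\<lambda>l. foldr (\<otimes>) l \<one>"
  have prod_append: "foldr (\<otimes>) l b = ?prod l \<otimes> b" for l b
    by (induction l) (simp_all add: m_assoc)
  have "generate G S \<subseteq> ?prod ` lists (S \<union> (\<lambda>x. inv x) ` S)"
  proof
    fix x assume "x \<in> generate G S"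
    then show "x \<in> ?prod ` lists (S \<union> (\<lambda>x. inv x) ` S)"
    proof (induction rule: generate.induct)
      case one
      show ?case by (rule image_eqI[of _ _ "[]"]) auto
    next
      case (incl h)
      show ?case by (rule image_eqI[of _ _ "[h]"]) (use incl in auto)
    next
      case (inv h)
      show ?case by (rule image_eqI[of _ _ "[inv h]"]) (use inv in auto)
    next
      case (eng h1 h2)
      then obtain l1 l2 where "l1 \<in> lists (S \<union> (\<lambda>x. inv x) ` S)" "h1 = ?prod l1"
        "l2 \<in> lists (S \<union> (\<lambda>x. inv x) ` S)" "h2 = ?prod l2" by blast
      then show ?case using prod_append[of l1 h2] by (intro image_eqI[of _ _ "l1 @ l2"]) auto
    qed
  qed
  then show ?thesis by (rule countable_subset) (use assms in auto)
qed

lemma countable_UNIV_if_finitely_generated: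
  assumes "finitely_generated G"
  shows "countable (UNIV :: 'a set)"
  using assms countable_generate[OF countable_finite] carrier_eq_UNIV
  unfolding finitely_generated_def by metis

lemma shift_stabilizer_normal:
  assumes S: "\<And>h \<omega>. \<omega> \<in> S \<Longrightarrow> shift G h \<omega> \<in> S"
  shows "shift_stabilizer G S \<lhd> G"
proof (rule normal_invI)
  show "subgroup (shift_stabilizer G S) G"
  proof (rule subgroupI)
    have "\<one> \<in> shift_stabilizer G S" by (simp add: shift_stabilizer_def)
    then show "shift_stabilizer G S \<noteq> {}" by blast
    fix a b assume a: "a \<in> shift_stabilizer G S" and b: "b \<in> shift_stabilizer G S"
    have "shift G (inv a) \<omega> = \<omega>" if "\<omega> \<in> S" for \<omega>
      using a that shift_eq_iff[of a \<omega> \<one>] by (auto simp: shift_stabilizer_def)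
    then show "inv a \<in> shift_stabilizer G S" by (simp add: shift_stabilizer_def)
    show "a \<otimes> b \<in> shift_stabilizer G S"
      using a b by (simp add: shift_stabilizer_def flip: shift_shift)
  qed simp
next
  fix x h assume h: "h \<in> shift_stabilizer G S"
  have "shift G (x \<otimes> h \<otimes> inv x) \<omega> = \<omega>" if "\<omega> \<in> S" for \<omega>
  proof -
    have "shift G (x \<otimes> h \<otimes> inv x) \<omega> = shift G x (shift G h (shift G (inv x) \<omega>))"
      by (simp add: shift_shift m_assoc)
    also have "\<dots> = shift G x (shift G (inv x) \<omega>)"
      using h S[OF that] by (simp add: shift_stabilizer_def)
    also have "\<dots> = shift G (x \<otimes> inv x) \<omega>" by (rule shift_shift)
    finally show ?thesis by simp
  qed
  then show "x \<otimes> h \<otimes> inv x \<in> shift_stabilizer G S" by (simp add: shift_stabilizer_def)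
qed

lemma finite_lcosets_shift_stabilizer:
  assumes S: "\<And>h \<omega>. \<omega> \<in> S \<Longrightarrow> shift G h \<omega> \<in> S" and "finite S"
  shows "finite (lcosets (shift_stabilizer G S))"
proof -
  let ?act = "\<lambda>a. restrict (shift G a) S"
  have "b \<in> a <# shift_stabilizer G S \<longleftrightarrow> ?act a = ?act b" for a b
  proof -
    have "b \<in> a <# shift_stabilizer G S \<longleftrightarrow> (\<forall>\<omega>\<in>S. shift G a \<omega> = shift G b \<omega>)"
      by (simp add: mem_lcos_iff shift_stabilizer_def shift_eq_iff)
    also have "\<dots> \<longleftrightarrow> ?act a = ?act b" by (metis restrict_apply' restrict_ext)
    finally show ?thesis .
  qed
  then have "lcosets (shift_stabilizer G S) \<subseteq> (\<lambda>f. {b. f = ?act b}) ` (S \<rightarrow>\<^sub>E S)"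
    using S by (auto simp: LCOSETS_def)
  then show ?thesis by (rule finite_subset) (simp add: finite_PiE \<open>finite S\<close>)
qed

lemma lcos_in_lcosets: "C \<in> lcosets H \<Longrightarrow> g <# C \<in> lcosets H"
  by (auto simp: LCOSETS_def lcos_m_assoc)

lemma l_coset_in_lcosets [simp]: "a <# H \<in> lcosets H"
  unfolding LCOSETS_def by (rule UN_I[of a]) simp_all

lemma lcos_bij: "bij_betw (\<lambda>C. g <# C) (lcosets H) (lcosets H)"
  by (rule bij_betw_byWitness[where f'="\<lambda>C. inv g <# C"])
    (auto simp: LCOSETS_def lcos_m_assoc lcos_mult_one)

lemma lcosets_eq_rcosets: "H \<lhd> G \<Longrightarrow> lcosets H = rcosets H"
  unfolding LCOSETS_def RCOSETS_def using normal.coset_eq by fastforce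

lemma lcos_set_mult:
  assumes "H \<lhd> G"
  shows "(a <# H) <#> (b <# H) = (a \<otimes> b) <# H"
  using normal.coset_eq[OF assms] normal.rcos_sum[OF assms] by simp

lemma finite_lcosets_Int:
  assumes "finite (lcosets H)" "finite (lcosets K)"
  shows "finite (lcosets (H \<inter> K))"
proof -
  have "a <# (H \<inter> K) = (a <# H) \<inter> (a <# K)" for a by (simp add: set_eq_iff mem_lcos_iff)
  then have "lcosets (H \<inter> K) \<subseteq> (\<lambda>(A, B). A \<inter> B) ` ((lcosets H) \<times> (lcosets K))"
    by (auto simp: LCOSETS_def)
  then show ?thesis by (rule finite_subset) (simp add: assms)
qed

lemma lcos_ne_if_notin:
  assumes "H \<lhd> G" "C \<in> lcosets H" "g \<notin> H"
  shows "g <# C \<noteq> C"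
proof
  obtain a where a: "C = a <# H" using assms(2) by (auto simp: LCOSETS_def)
  assume "g <# C = C"
  then have "g \<otimes> a \<in> a <# H"
    using lcos_self[OF _ normal_imp_subgroup[OF assms(1)], of "g \<otimes> a"] by (simp add: a lcos_m_assoc)
  then have "a \<otimes> (inv a \<otimes> (g \<otimes> a)) \<otimes> inv a \<in> H"
    using normal.inv_op_closed2[OF assms(1)] by (simp add: mem_lcos_iff)
  moreover have "a \<otimes> (inv a \<otimes> (g \<otimes> a)) \<otimes> inv a = g"
    by (metis m_assoc r_inv l_inv r_one l_one inv_closed UNIV_I carrier_eq_UNIV)
  ultimately show False using assms(3) by simp
qed

lemma coset_rep_mem:
  assumes "subgroup H G" "C \<in> lcosets H"
  shows "coset_rep C \<in> C"
proof -
  obtain a where "C = a <# H" using assms(2) by (auto simp: LCOSETS_def)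
  then have "a \<in> C" using lcos_self[OF _ assms(1)] by simp
  then show ?thesis unfolding coset_rep_def by (rule someI)
qed

lemma lcos_coset_rep:
  assumes "subgroup H G" "C \<in> lcosets H"
  shows "coset_rep C <# H = C"
proof -
  obtain a where "C = a <# H" using assms(2) by (auto simp: LCOSETS_def)
  then show ?thesis using l_repr_independence[OF _ _ assms(1)] coset_rep_mem[OF assms] by simp
qed

lemma coset_rep_lcos:
  assumes "subgroup H G" "C \<in> lcosets H"
  shows "coset_rep (g <# C) \<in> (g \<otimes> coset_rep C) <# H"
proof -
  have "g <# C = (g \<otimes> coset_rep C) <# H"
    by (subst (1) lcos_coset_rep[OF assms, symmetric]) (simp add: lcos_m_assoc)
  then show ?thesis using coset_rep_mem[OF assms(1) lcos_in_lcosets[OF assms(2)], of g] by simp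
qed

lemma set_mult_lcosets:
  assumes "H \<lhd> G" "v \<in> lcosets H" "w \<in> lcosets H"
  shows "v <#> w = (coset_rep v \<otimes> coset_rep w) <# H"
  using lcos_coset_rep[OF normal_imp_subgroup[OF assms(1)]] lcos_set_mult[OF assms(1)] assms(2,3)
  by metis

lemma coset_rep_set_mult:
  assumes "H \<lhd> G" "v \<in> lcosets H" "w \<in> lcosets H"
  shows "coset_rep (v <#> w) \<in> (coset_rep v \<otimes> coset_rep w) <# H"
  using coset_rep_mem[OF normal_imp_subgroup[OF assms(1)], of "v <#> w"] set_mult_lcosets[OF assms]
  by simp

lemma periodic_measure_lcoset_constant:
  fixes \<mu> :: "('a \<Rightarrow> 'x::metric_space) measure"
  assumes "finitely_generated G" "compact (UNIV :: 'x set)" "periodic_measure G \<mu>"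
  obtains N where "N \<lhd> G" "finite (lcosets N)" "AE \<omega> in \<mu>. lcoset_constant G N \<omega>"
proof -
  let ?S = "measure_support \<mu>"
  let ?N = "shift_stabilizer G ?S"
  have inv: "invariant_prob G \<mu>" and fin: "finite ?S"
    using assms(3) by (auto simp: periodic_measure_def)
  then have s\<mu>: "sets \<mu> = sets borel" by (simp add: invariant_prob_def)
  have S: "shift G h \<omega> \<in> ?S" if "\<omega> \<in> ?S" for h \<omega>
    using shift_in_measure_support[OF inv _ that] by simp
  have "AE \<omega> in \<mu>. \<omega> (g \<otimes> h) = \<omega> g" if "h \<in> ?N" for g h
  proof (rule AE_eq_if_eq_on_support[OF s\<mu> compact_UNIV_fun[OF assms(2)]])
    fix \<omega> assume "\<omega> \<in> ?S"
    then have "shift G h \<omega> = \<omega>" using that by (simp add: shift_stabilizer_def)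
    then show "\<omega> (g \<otimes> h) = \<omega> g" by (metis shift_def)
  qed simp_all
  moreover have "countable (UNIV :: 'a set)"
    using countable_UNIV_if_finitely_generated[OF assms(1)] .
  moreover from this have "countable ?N" by (rule countable_subset[OF subset_UNIV])
  ultimately have "AE \<omega> in \<mu>. \<forall>g\<in>UNIV. \<forall>h\<in>?N. \<omega> (g \<otimes> h) = \<omega> g"
    by (intro AE_ball_countable') auto
  then have "AE \<omega> in \<mu>. lcoset_constant G ?N \<omega>" by (simp add: lcoset_constant_def)
  then show ?thesis
    using that shift_stabilizer_normal[OF S] finite_lcosets_shift_stabilizer[OF S fin] by blast
qed

lemma rf_chain_below:
  assumes N: "N \<lhd> G" "finite (lcosets N)" and rf: "residually_finite G"
    and cnt: "countable (UNIV :: 'a set)"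
  obtains \<Gamma> where "rf_chain G \<Gamma>" "\<And>n. \<Gamma> n \<subseteq> N"
proof -
  have "\<exists>M. M \<lhd> G \<and> finite (lcosets M) \<and> (g \<noteq> \<one> \<longrightarrow> g \<notin> M)" for g
  proof (cases "g = \<one>")
    case False
    then obtain M where "M \<lhd> G" "finite (rcosets M)" "g \<notin> M"
      using rf unfolding residually_finite_def by auto
    then show ?thesis using lcosets_eq_rcosets by auto
  qed (use N in blast)
  then obtain M where M: "\<And>g. M g \<lhd> G" "\<And>g. finite (lcosets (M g))"
    "\<And>g. g \<noteq> \<one> \<Longrightarrow> g \<notin> M g"
    by metis
  define \<Gamma> where "\<Gamma> n = N \<inter> (\<Inter>i\<le>n. M (from_nat_into UNIV i))" for n
  have \<Gamma>_Suc: "\<Gamma> (Suc n) = \<Gamma> n \<inter> M (from_nat_into UNIV (Suc n))" for n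
    by (auto simp: \<Gamma>_def atMost_Suc)
  have \<Gamma>: "\<Gamma> n \<lhd> G \<and> finite (lcosets (\<Gamma> n))" for n
  proof (induction n)
    case 0
    show ?case
      using normal_subgroup_intersect[OF N(1) M(1)] finite_lcosets_Int[OF N(2) M(2)]
      by (simp add: \<Gamma>_def)
  next
    case (Suc n)
    then show ?case
      using normal_subgroup_intersect[OF _ M(1)] finite_lcosets_Int[OF _ M(2)]
      by (simp add: \<Gamma>_Suc)
  qed
  have "(\<Inter>n. \<Gamma> n) \<subseteq> {\<one>}"
  proof
    fix x assume x: "x \<in> (\<Inter>n. \<Gamma> n)"
    obtain i where "from_nat_into UNIV i = x" using from_nat_into_surj[OF cnt] by blast
    then have "x \<in> M x" using x by (auto simp: \<Gamma>_def)
    then show "x \<in> {\<one>}" using M(3) by blast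
  qed
  moreover have "\<one> \<in> \<Gamma> n" for n
    using \<Gamma> by (simp add: normal_imp_subgroup subgroup.one_closed)
  ultimately have "(\<Inter>n. \<Gamma> n) = {\<one>}" by blast
  then have "rf_chain G \<Gamma>" using \<Gamma> by (simp add: rf_chain_def \<Gamma>_Suc)
  then show ?thesis using that by (auto simp: \<Gamma>_def)
qed

lemma rf_sofic_approx:
  assumes ch: "rf_chain G \<Gamma>"
  shows "sofic_approx G (rf_V G \<Gamma>) (rf_\<sigma> G)"
proof -
  have \<Gamma>: "\<Gamma> n \<lhd> G" "finite (lcosets (\<Gamma> n))" for n
    using ch by (auto simp: rf_chain_def)
  have ne: "lcosets (\<Gamma> n) \<noteq> {}" for n by (auto simp: LCOSETS_def)
  have "(\<lambda>n. real (card {C \<in> lcosets (\<Gamma> n). g <# (h <# C) = (g \<otimes> h) <# C})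
      / real (card (lcosets (\<Gamma> n)))) \<longlonglongrightarrow> 1" for g h
    by (rule tendsto_card_ratio_one) (simp add: \<Gamma> ne lcos_m_assoc)
  moreover have "(\<lambda>n. real (card {C \<in> lcosets (\<Gamma> n). g <# C \<noteq> C})
      / real (card (lcosets (\<Gamma> n)))) \<longlonglongrightarrow> 1" if "g \<noteq> \<one>" for g
  proof (rule tendsto_card_ratio_one)
    have "g \<notin> (\<Inter>n. \<Gamma> n)" using ch that by (simp add: rf_chain_def)
    then obtain m where "g \<notin> \<Gamma> m" by blast
    moreover have "\<Gamma> n \<subseteq> \<Gamma> m" if "m \<le> n" for n
      using lift_Suc_antimono_le[of \<Gamma>, OF _ that] ch by (auto simp: rf_chain_def)
    ultimately show "eventually (\<lambda>n. lcosets (\<Gamma> n) \<noteq> {} \<and> finite (lcosets (\<Gamma> n)) \<and>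
        (\<forall>C\<in>lcosets (\<Gamma> n). g <# C \<noteq> C)) sequentially"
      using \<Gamma> ne lcos_ne_if_notin unfolding eventually_sequentially by blast
  qed
  moreover have "rf_\<sigma> G n g = (\<lambda>C. g <# C)" for n g by (rule ext) (simp add: rf_\<sigma>_def)
  ultimately show ?thesis
    using \<Gamma> lcos_bij by (simp add: sofic_approx_def rf_V_def rf_\<sigma>_def)
qed

section \<open>Exact sofic and residually finite models\<close>

lemma lift_measure_right_invariant:
  fixes \<mu> :: "('a \<Rightarrow> 'x::topological_space) measure"
  assumes inv: "invariant_prob G \<mu>" and AE: "AE \<omega> in \<mu>. lcoset_constant G N \<omega>"
    and H: "H \<lhd> G" "H \<subseteq> N" and w: "w \<in> lcosets H"
  shows "distr (lift_measure \<mu> (lcosets H) coset_rep) (PiM (lcosets H) (\<lambda>_. borel))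
      (\<lambda>\<rho>. \<lambda>v\<in>lcosets H. \<rho> (v <#> w)) = lift_measure \<mu> (lcosets H) coset_rep"
proof -
  let ?L = "lcosets H"
  let ?T = "\<lambda>\<omega>. \<lambda>u\<in>?L. \<omega> (coset_rep u)"
  let ?R = "\<lambda>\<rho>. \<lambda>v\<in>?L. \<rho> (v <#> w)"
  have s\<mu>: "sets \<mu> = sets borel" using inv by (simp add: invariant_prob_def)
  have vw: "v <#> w \<in> ?L" if "v \<in> ?L" for v
    using set_mult_lcosets[OF H(1) that w] by simp
  have T: "?T \<in> \<mu> \<rightarrow>\<^sub>M PiM ?L (\<lambda>_. borel)" by (rule measurable_lift[OF s\<mu>])
  have R: "?R \<in> PiM ?L (\<lambda>_. borel) \<rightarrow>\<^sub>M PiM ?L (\<lambda>_. borel :: 'x measure)"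
  proof (rule measurable_restrict)
    fix v assume "v \<in> ?L"
    then show "(\<lambda>\<rho>. \<rho> (v <#> w)) \<in> PiM ?L (\<lambda>_. borel) \<rightarrow>\<^sub>M borel"
      by (rule measurable_component_singleton[OF vw])
  qed
  have shift: "shift G (coset_rep w) \<in> \<mu> \<rightarrow>\<^sub>M borel"
    using measurable_shift by (simp add: measurable_cong_sets[OF s\<mu> refl])
  \<comment> \<open>right multiplication by \<open>w\<close> corresponds to the shift by \<open>coset_rep w\<close>\<close>
  have "AE \<omega> in \<mu>. (?R \<circ> ?T) \<omega> = (?T \<circ> shift G (coset_rep w)) \<omega>"
    using AE
  proof eventually_elim
    case (elim \<omega>)
    show ?case
    proof
      fix v
      show "(?R \<circ> ?T) \<omega> v = (?T \<circ> shift G (coset_rep w)) \<omega> v"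
      proof (cases "v \<in> ?L")
        case True
        obtain h where "h \<in> H" "coset_rep (v <#> w) = coset_rep v \<otimes> coset_rep w \<otimes> h"
          using coset_rep_set_mult[OF H(1) True w] unfolding l_coset_def by blast
        then have "\<omega> (coset_rep (v <#> w)) = \<omega> (coset_rep v \<otimes> coset_rep w)"
          using elim H(2) by (auto simp: lcoset_constant_def)
        then show ?thesis using True vw[OF True] by (simp add: shift_def)
      qed simp
    qed
  qed
  then have "distr \<mu> (PiM ?L (\<lambda>_. borel)) (?R \<circ> ?T)
      = distr \<mu> (PiM ?L (\<lambda>_. borel)) (?T \<circ> shift G (coset_rep w))"
    by (rule distr_cong_AE[OF refl refl _ measurable_comp[OF T R]
          measurable_comp[OF shift measurable_lift[OF refl]]])
  also have "\<dots> = distr (distr \<mu> borel (shift G (coset_rep w))) (PiM ?L (\<lambda>_. borel)) ?T"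
    by (rule distr_distr[OF measurable_lift[OF refl] shift, symmetric])
  also have "\<dots> = lift_measure \<mu> ?L coset_rep"
    using inv by (simp add: invariant_prob_def lift_measure_def)
  finally show ?thesis by (simp add: lift_measure_def distr_distr[OF R T])
qed

lemma exact_sofic_model:
  fixes \<mu> :: "('a \<Rightarrow> 'x::metric_space) measure"
  assumes X: "compact (UNIV :: 'x set)" and inv: "invariant_prob G \<mu>"
    and N: "subgroup N G" "finite (lcosets N)" and AE: "AE \<omega> in \<mu>. lcoset_constant G N \<omega>"
    and "sofic_group G"
  shows "\<exists>(V :: nat \<Rightarrow> nat set) \<sigma> \<mu>s. sofic_model G \<mu> V \<sigma> \<mu>s \<and>
           (\<forall>n. \<forall>v\<in>V n. distr (\<mu>s n) borel (Pi_v \<sigma> n v) = \<mu>)"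
proof -
  obtain V0 :: "nat \<Rightarrow> nat set" and \<sigma>0 where sa0: "sofic_approx G V0 \<sigma>0"
    using \<open>sofic_group G\<close> by (auto simp: sofic_group_def)
  let ?K = "lcosets N"
  define V1 where "V1 n = V0 n \<times> ?K" for n
  define \<sigma>1 where "\<sigma>1 n g = map_prod (\<sigma>0 n g) (\<lambda>C. g <# C)" for n g
  have "N \<in> ?K" using l_coset_in_lcosets[of \<one> N] lcos_mult_one[of N] by simp
  then have sa1: "sofic_approx G V1 \<sigma>1"
    unfolding V1_def \<sigma>1_def
    by (intro sofic_approx_prod_action[OF sa0 N(2)]) (auto simp: lcos_bij lcos_m_assoc)
  \<comment> \<open>the vertex sets must be sets of naturals, so \<open>V0 n \<times> G/N\<close> is encoded injectively\<close>
  define f where "f = (\<lambda>(v, C). prod_encode (v, to_nat_on ?K C))"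
  have inj: "inj_on f (V1 n)" for n
    using inj_on_to_nat_on[OF countable_finite[OF N(2)]]
    by (auto simp: inj_on_def f_def V1_def prod_encode_eq)
  define V where "V n = f ` V1 n" for n
  define \<sigma> where "\<sigma> n g = f \<circ> \<sigma>1 n g \<circ> inv_into (V1 n) f" for n g
  define r where "r n = coset_rep \<circ> snd \<circ> inv_into (V1 n) f" for n
  define \<mu>s where "\<mu>s n = lift_measure \<mu> (V n) (r n)" for n
  have sa: "sofic_approx G V \<sigma>"
    unfolding V_def \<sigma>_def by (rule sofic_approx_image[OF is_group sa1 inj])
  have exact: "distr (\<mu>s n) borel (Pi_v \<sigma> n m) = \<mu>" if m: "m \<in> V n" for n m
  proof -
    obtain p where "p \<in> V1 n" "m = f p" using m unfolding V_def by blast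
    moreover obtain v C where "p = (v, C)" by (cases p)
    ultimately have vC: "(v, C) \<in> V1 n" "m = f (v, C)" by simp_all
    have "bij_betw (\<sigma>1 n g) (V1 n) (V1 n)" for g using sa1 by (simp add: sofic_approx_def)
    then have \<sigma>1_V1: "\<sigma>1 n g (v, C) \<in> V1 n" for g using vC(1) by (rule bij_betw_apply)
    show ?thesis unfolding \<mu>s_def
    proof (rule distr_Pi_v_lift_measure[OF inv X AE])
      show "finite (V n)" using sa by (simp add: sofic_approx_def)
      show "\<sigma> n g m \<in> V n" for g
        using \<sigma>1_V1 vC by (simp add: \<sigma>_def V_def inv_into_f_f[OF inj])
      have "C \<in> ?K" using vC(1) by (simp add: V1_def)
      then show "r n (\<sigma> n g m) \<in> (g \<otimes> r n m) <# N" for g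
        using coset_rep_lcos[OF N(1)] \<sigma>1_V1 vC
        by (simp add: \<sigma>_def r_def \<sigma>1_def inv_into_f_f[OF inj])
    qed simp
  qed
  have "sofic_model G \<mu> V \<sigma> \<mu>s"
    using inv by (intro sofic_model_if_exact[OF sa is_group] exact)
      (simp_all add: \<mu>s_def invariant_prob_def prob_space_lift_measure)
  then show ?thesis using exact by (intro exI[of _ V] exI[of _ \<sigma>] exI[of _ \<mu>s]) simp
qed

lemma exact_rf_model:
  fixes \<mu> :: "('a \<Rightarrow> 'x::metric_space) measure"
  assumes X: "compact (UNIV :: 'x set)" and inv: "invariant_prob G \<mu>"
    and N: "N \<lhd> G" "finite (lcosets N)" and AE: "AE \<omega> in \<mu>. lcoset_constant G N \<omega>"
    and rf: "residually_finite G" and cnt: "countable (UNIV :: 'a set)"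
  shows "\<exists>\<Gamma> \<mu>s. rf_model G \<mu> \<Gamma> \<mu>s \<and>
           (\<forall>n. \<forall>v\<in>rf_V G \<Gamma> n. distr (\<mu>s n) borel (Pi_v (rf_\<sigma> G) n v) = \<mu>)"
proof -
  obtain \<Gamma> where ch: "rf_chain G \<Gamma>" and \<Gamma>N: "\<And>n. \<Gamma> n \<subseteq> N"
    using rf_chain_below[OF N rf cnt] by blast
  have \<Gamma>: "\<Gamma> n \<lhd> G" "finite (lcosets (\<Gamma> n))" for n
    using ch by (auto simp: rf_chain_def)
  define \<mu>s where "\<mu>s n = lift_measure \<mu> (rf_V G \<Gamma> n) coset_rep" for n
  have exact: "distr (\<mu>s n) borel (Pi_v (rf_\<sigma> G) n v) = \<mu>" if "v \<in> rf_V G \<Gamma> n" for n v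
    unfolding \<mu>s_def
  proof (rule distr_Pi_v_lift_measure[OF inv X AE])
    show "finite (rf_V G \<Gamma> n)" using \<Gamma> by (simp add: rf_V_def)
    show "rf_\<sigma> G n g v \<in> rf_V G \<Gamma> n" for g
      using that by (simp add: rf_V_def rf_\<sigma>_def lcos_in_lcosets)
    show "coset_rep (rf_\<sigma> G n g v) \<in> (g \<otimes> coset_rep v) <# N" for g
    proof -
      have "coset_rep (g <# v) \<in> (g \<otimes> coset_rep v) <# \<Gamma> n"
        using coset_rep_lcos[OF normal_imp_subgroup[OF \<Gamma>(1)]] that by (simp add: rf_V_def)
      moreover have "(g \<otimes> coset_rep v) <# \<Gamma> n \<subseteq> (g \<otimes> coset_rep v) <# N"
        using \<Gamma>N by (auto simp: l_coset_def)
      ultimately show ?thesis by (auto simp: rf_\<sigma>_def)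
    qed
  qed simp
  have "sofic_model G \<mu> (rf_V G \<Gamma>) (rf_\<sigma> G) \<mu>s"
    using inv by (intro sofic_model_if_exact[OF rf_sofic_approx[OF ch] is_group] exact)
      (simp_all add: \<mu>s_def invariant_prob_def prob_space_lift_measure)
  moreover have "distr (\<mu>s n) (PiM (rf_V G \<Gamma> n) (\<lambda>_. borel))
      (\<lambda>\<rho>. \<lambda>v\<in>rf_V G \<Gamma> n. \<rho> (v <#> w)) = \<mu>s n" if "w \<in> rf_V G \<Gamma> n" for n w
    using lift_measure_right_invariant[OF inv AE \<Gamma>(1) \<Gamma>N] that by (simp add: \<mu>s_def rf_V_def)
  ultimately have "rf_model G \<mu> \<Gamma> \<mu>s" using ch by (simp add: rf_model_def)
  then show ?thesis using exact by (intro exI[of _ \<Gamma>] exI[of _ \<mu>s]) simp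
qed

end

theorem mainTheorem11:
  fixes G :: "('g, 'b) monoid_scheme"
    and \<mu> :: "('g \<Rightarrow> 'x::metric_space) measure"
  assumes "group G" and "carrier G = UNIV"
    and "finitely_generated G" and "sofic_group G"
    and "compact (UNIV :: 'x set)"
    and "periodic_measure G \<mu>"
  shows "(\<exists>(V :: nat \<Rightarrow> nat set) \<sigma> \<mu>s. sofic_model G \<mu> V \<sigma> \<mu>s \<and>
            (\<forall>n. \<forall>v\<in>V n. distr (\<mu>s n) borel (Pi_v \<sigma> n v) = \<mu>))
       \<and> (residually_finite G \<longrightarrow>
            (\<exists>\<Gamma> \<mu>s. rf_model G \<mu> \<Gamma> \<mu>s \<and>
               (\<forall>n. \<forall>v\<in>rf_V G \<Gamma> n. distr (\<mu>s n) borel (Pi_v (rf_\<sigma> G) n v) = \<mu>)))"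
proof -
  interpret group_on_UNIV G
    using assms(1,2) by (intro group_on_UNIV.intro group_on_UNIV_axioms.intro)
  obtain N where N: "N \<lhd> G" "finite (lcosets\<^bsub>G\<^esub> N)" "AE \<omega> in \<mu>. lcoset_constant G N \<omega>"
    using periodic_measure_lcoset_constant[OF assms(3,5,6)] by blast
  have inv: "invariant_prob G \<mu>" using assms(6) by (simp add: periodic_measure_def)
  show ?thesis
    using exact_sofic_model[OF assms(5) inv normal_imp_subgroup[OF N(1)] N(2,3) assms(4)]
      exact_rf_model[OF assms(5) inv N _ countable_UNIV_if_finitely_generated[OF assms(3)]]
    by simp
qed

end
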